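(* Every strong (i.e. strongly connected) tournament $T$ is $2^{*}$-weakly connected.
   Context: A tournament is a digraph in which each pair of distinct vertices is joined by exactly one arc; $x$ dominates $y$ if $xy$ is an arc. Paths are directed paths. For distinct vertices $u,v$ of a digraph $D$, a weak $k^{*}$-container between $u$ and $v$ is a set of $k$ internally disjoint paths, each of which is either a $(u,v)$-path or a $(v,u)$-path (different paths may have different directions), whose union contains every vertex of $D$. A strong $k^{*}$-container between $u$ and $v$ is a set of $k$ internally disjoint paths that are either all $(u,v)$-paths or all $(v,u)$-paths, whose union contains every vertex of $D$. $D$ is $k^{*}$-weakly (resp. $k^{*}$-strongly) connected if there is a weak (resp. strong) $k^{*}$-container between every two distinct vertices of $D$. *)

theory Defs
  imports Main
begin

text \<open>A digraph is given by a finite vertex set V and an arc relation A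
  (A x y means that x dominates y, i.e. xy is an arc).\<close>

definition tournament :: "'a set \<Rightarrow> ('a \<Rightarrow> 'a \<Rightarrow> bool) \<Rightarrow> bool" where
  "tournament V A \<longleftrightarrow> finite V
     \<and> (\<forall>x y. A x y \<longrightarrow> x \<in> V \<and> y \<in> V)
     \<and> (\<forall>x. \<not> A x x)
     \<and> (\<forall>x\<in>V. \<forall>y\<in>V. x \<noteq> y \<longrightarrow> (A x y \<or> A y x))
     \<and> (\<forall>x y. A x y \<longrightarrow> \<not> A y x)"

definition strongly_connected :: "'a set \<Rightarrow> ('a \<Rightarrow> 'a \<Rightarrow> bool) \<Rightarrow> bool" where
  "strongly_connected V A \<longleftrightarrow> (\<forall>x\<in>V. \<forall>y\<in>V. A\<^sup>*\<^sup>* x y)"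

definition is_path :: "'a set \<Rightarrow> ('a \<Rightarrow> 'a \<Rightarrow> bool) \<Rightarrow> 'a list \<Rightarrow> bool" where
  "is_path V A p \<longleftrightarrow> p \<noteq> [] \<and> distinct p \<and> set p \<subseteq> V
     \<and> (\<forall>i. Suc i < length p \<longrightarrow> A (p ! i) (p ! Suc i))"

definition is_uv_path :: "'a set \<Rightarrow> ('a \<Rightarrow> 'a \<Rightarrow> bool) \<Rightarrow> 'a \<Rightarrow> 'a \<Rightarrow> 'a list \<Rightarrow> bool" where
  "is_uv_path V A u v p \<longleftrightarrow> is_path V A p \<and> hd p = u \<and> last p = v"

definition interior :: "'a list \<Rightarrow> 'a set" where
  "interior p = set (butlast (tl p))"

definition weak_container ::
  "'a set \<Rightarrow> ('a \<Rightarrow> 'a \<Rightarrow> bool) \<Rightarrow> nat \<Rightarrow> 'a \<Rightarrow> 'a \<Rightarrow> 'a list list \<Rightarrow> bool" where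
  "weak_container V A k u v Ps \<longleftrightarrow> length Ps = k \<and> distinct Ps
     \<and> (\<forall>p\<in>set Ps. is_uv_path V A u v p \<or> is_uv_path V A v u p)
     \<and> (\<forall>i<k. \<forall>j<k. i \<noteq> j \<longrightarrow> interior (Ps ! i) \<inter> interior (Ps ! j) = {})
     \<and> (\<Union>p\<in>set Ps. set p) = V"

definition k_star_weakly_connected :: "'a set \<Rightarrow> ('a \<Rightarrow> 'a \<Rightarrow> bool) \<Rightarrow> nat \<Rightarrow> bool" where
  "k_star_weakly_connected V A k \<longleftrightarrow>
     (\<forall>u\<in>V. \<forall>v\<in>V. u \<noteq> v \<longrightarrow> (\<exists>Ps. weak_container V A k u v Ps))"

end

theory Submission imports Defs begin

(* By Camion's theorem a strong tournament with at least two vertices has a Hamiltonian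
   cycle: a cycle missing some vertex can always be lengthened. If an outside vertex x has
   both an in-neighbour and an out-neighbour on the cycle, x can be inserted between two
   consecutive cycle vertices. Otherwise every outside vertex dominates the whole cycle
   or is dominated by it, and strong connectivity forces an arc e \<rightarrow> d from a vertex
   dominated by the cycle to one dominating it, and the detour c\<^sub>1 e d c\<^sub>3 replaces
   c\<^sub>1 c\<^sub>2 c\<^sub>3 (cycles in a tournament have length at least 3).
   Cutting a Hamiltonian cycle at u and v yields a (u,v)-path and a (v,u)-path whose
   interiors partition the remaining vertices. *)

lemma tournamentD:
  assumes "tournament V A"
  shows "finite V" and "A x y \<Longrightarrow> x \<in> V" and "A x y \<Longrightarrow> y \<in> V" and "\<not> A x x"
    and "x \<in> V \<Longrightarrow> y \<in> V \<Longrightarrow> x \<noteq> y \<Longrightarrow> A x y \<or> A y x"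
    and "A x y \<Longrightarrow> \<not> A y x"
  using assms unfolding tournament_def by blast+

lemma is_path_iff_successively:
  "is_path V A p \<longleftrightarrow> p \<noteq> [] \<and> distinct p \<and> set p \<subseteq> V \<and> successively A p"
  by (simp add: is_path_def successively_conv_nth)

lemma strongly_connected_successor_closed:
  assumes "strongly_connected V A" and "a \<in> S" "a \<in> V"
    and closed: "\<And>s w. s \<in> S \<Longrightarrow> A s w \<Longrightarrow> w \<in> S"
  shows "V \<subseteq> S"
proof
  fix b assume "b \<in> V"
  with assms have "A\<^sup>*\<^sup>* a b" unfolding strongly_connected_def by blast
  then show "b \<in> S" using \<open>a \<in> S\<close> by (induction rule: rtranclp_induct) (auto intro: closed)
qed

lemma rtranclp_imp_distinct_path:
  assumes "A\<^sup>*\<^sup>* x y"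
  shows "\<exists>p. p \<noteq> [] \<and> distinct p \<and> successively A p \<and> hd p = x \<and> last p = y
           \<and> set p \<subseteq> insert x {w. \<exists>s. A s w}"
  using assms
proof (induction rule: converse_rtranclp_induct)
  case base
  show ?case by (intro exI[of _ "[y]"]) auto
next
  case (step x z)
  then obtain p where p: "p \<noteq> []" "distinct p" "successively A p" "hd p = z" "last p = y"
    "set p \<subseteq> insert z {w. \<exists>s. A s w}" by blast
  show ?case
  proof (cases "x \<in> set p")
    case True
    then obtain as bs where p_split: "p = as @ x # bs" by (meson split_list)
    with p have "successively A (x # bs)" by (simp add: successively_append_iff)
    with p p_split step(1) show ?thesis by (intro exI[of _ "x # bs"]) auto
  next
    case False
    with p step(1) show ?thesis by (intro exI[of _ "x # p"]) (auto simp: successively_Cons)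
  qed
qed

definition is_cycle :: "'a set \<Rightarrow> ('a \<Rightarrow> 'a \<Rightarrow> bool) \<Rightarrow> 'a list \<Rightarrow> bool" where
  "is_cycle V A c \<longleftrightarrow>
     distinct c \<and> set c \<subseteq> V \<and> 2 \<le> length c \<and> successively A c \<and> A (last c) (hd c)"

lemma is_cycle_append_swap:
  assumes "is_cycle V A (xs @ ys)" and "ys \<noteq> []"
  shows "is_cycle V A (ys @ xs)"
proof (cases "xs = []")
  case False
  with assms have "successively A xs" "successively A ys" "A (last xs) (hd ys)"
    "A (last ys) (hd xs)"
    unfolding is_cycle_def by (auto simp: successively_append_iff)
  with assms False show ?thesis unfolding is_cycle_def by (auto simp: successively_append_iff)
qed (use assms in simp)

lemma tournament_cycle_length_ge_3:
  assumes "tournament V A" and "is_cycle V A c"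
  shows "3 \<le> length c"
proof (rule ccontr)
  assume "\<not> 3 \<le> length c"
  with assms(2) have "length c = 2" unfolding is_cycle_def by simp
  then obtain a b where "c = [a, b]" by (auto simp: length_Suc_conv numeral_2_eq_2)
  with assms(2) have "A a b" "A b a" unfolding is_cycle_def by auto
  with assms(1) show False by (blast dest: tournamentD(6))
qed

lemma successively_insert_vertex:
  assumes "successively A (y # xs)" and "A y x" and "z \<in> set xs" "A x z"
    and "\<forall>w\<in>set xs. A w x \<or> A x w"
  shows "\<exists>ys. successively A ys \<and> hd ys = y \<and> last ys = last (y # xs)
           \<and> set ys = insert x (set (y # xs)) \<and> length ys = Suc (length (y # xs))"
  using assms
proof (induction xs arbitrary: y)
  case (Cons w ws)
  show ?case
  proof (cases "A x w")
    case True
    with Cons.prems show ?thesis by (intro exI[of _ "y # x # w # ws"]) auto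
  next
    case False
    with Cons.prems have "A w x" "z \<in> set ws" by auto
    with Cons.prems obtain ys where ys: "successively A ys" "hd ys = w" "last ys = last (w # ws)"
      "set ys = insert x (set (w # ws))" "length ys = Suc (length (w # ws))"
      using Cons.IH[of w] by auto
    then have "ys \<noteq> []" by auto
    with ys Cons.prems show ?thesis by (intro exI[of _ "y # ys"]) (auto simp: successively_Cons)
  qed
qed simp

lemma tournament_cycle_insert_vertex:
  assumes T: "tournament V A" and c: "is_cycle V A c"
    and x: "x \<in> V" "x \<notin> set c" and y: "y \<in> set c" "A y x" and z: "z \<in> set c" "A x z"
  shows "\<exists>c'. is_cycle V A c' \<and> length c' = Suc (length c)"
proof -
  obtain as bs where c_split: "c = as @ y # bs" using y(1) by (meson split_list)
  with c have c_rot: "is_cycle V A (y # bs @ as)"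
    using is_cycle_append_swap[of V A as "y # bs"] by simp
  from y z T have "z \<noteq> y" by (blast dest: tournamentD(6))
  with z c_split have "z \<in> set (bs @ as)" by auto
  moreover have "\<forall>w\<in>set (bs @ as). A w x \<or> A x w"
  proof
    fix w assume "w \<in> set (bs @ as)"
    with c c_split x have "w \<in> V" "w \<noteq> x" unfolding is_cycle_def by auto
    with T x show "A w x \<or> A x w" by (blast dest: tournamentD(5))
  qed
  ultimately obtain ys where ys: "successively A ys" "hd ys = y" "last ys = last (y # bs @ as)"
      "set ys = insert x (set (y # bs @ as))" "length ys = Suc (length (y # bs @ as))"
    using successively_insert_vertex[of A y "bs @ as" x z] c_rot y(2) z(2)
    unfolding is_cycle_def by blast
  have "card (set ys) = length ys"
    using ys(4,5) c_rot x(2) c_split distinct_card[of "y # bs @ as"]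
    unfolding is_cycle_def by simp
  then have "distinct ys" by (simp add: card_distinct)
  with ys c_rot c_split x show ?thesis
    unfolding is_cycle_def by (intro exI[of _ ys]) auto
qed

lemma strong_tournament_arc_dominated_to_dominating:
  assumes T: "tournament V A" and S: "strongly_connected V A"
    and C: "C \<subseteq> V" "C \<noteq> {}" "C \<noteq> V"
    and uniform: "\<forall>x\<in>V - C. (\<forall>c\<in>C. A x c) \<or> (\<forall>c\<in>C. A c x)"
  shows "\<exists>e d. e \<in> V - C \<and> d \<in> V - C \<and> (\<forall>c\<in>C. A c e \<and> A d c) \<and> A e d"
proof (rule ccontr)
  assume no_arc: "\<not> ?thesis"
  define E where "E = {x \<in> V - C. \<forall>c\<in>C. A c x}"
  have "w \<in> E" if s: "s \<in> E" and sw: "A s w" for s w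
  proof -
    from T sw have "w \<in> V" by (rule tournamentD(3))
    moreover from T s sw have "w \<notin> C" unfolding E_def by (blast dest: tournamentD(6))
    moreover from no_arc s sw \<open>w \<in> V\<close> \<open>w \<notin> C\<close> have "\<not> (\<forall>c\<in>C. A w c)"
      unfolding E_def by blast
    ultimately show "w \<in> E" using uniform unfolding E_def by blast
  qed
  then have "E = {}"
    using strongly_connected_successor_closed[OF S, of _ E] C unfolding E_def by blast
  then have "w \<in> C" if "s \<in> C" "A s w" for s w
    using that uniform tournamentD(3,6)[OF T] unfolding E_def by blast
  then show False
    using strongly_connected_successor_closed[OF S, of _ C] C by blast
qed

lemma strong_tournament_cycle_extend:
  assumes T: "tournament V A" and S: "strongly_connected V A"
    and c: "is_cycle V A c" and non_ham: "set c \<noteq> V"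
  shows "\<exists>c'. is_cycle V A c' \<and> length c < length c'"
proof (cases "\<exists>x\<in>V - set c. (\<exists>y\<in>set c. A y x) \<and> (\<exists>z\<in>set c. A x z)")
  case True
  then show ?thesis using tournament_cycle_insert_vertex[OF T c] by fastforce
next
  case False
  have c_in_V: "set c \<subseteq> V" and "set c \<noteq> {}" using c unfolding is_cycle_def by auto
  have "\<forall>x\<in>V - set c. (\<forall>y\<in>set c. A x y) \<or> (\<forall>y\<in>set c. A y x)"
  proof
    fix x assume x: "x \<in> V - set c"
    have "A x y \<or> A y x" if "y \<in> set c" for y
    proof -
      from c_in_V x that have "y \<in> V" "x \<noteq> y" by auto
      with T x show ?thesis by (blast dest: tournamentD(5))
    qed
    with False x show "(\<forall>y\<in>set c. A x y) \<or> (\<forall>y\<in>set c. A y x)" by blast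
  qed
  then obtain e d where ed: "e \<notin> set c" "d \<notin> set c" "\<forall>y\<in>set c. A y e \<and> A d y" "A e d"
    using strong_tournament_arc_dominated_to_dominating[OF T S c_in_V \<open>set c \<noteq> {}\<close> non_ham] by blast
  obtain c\<^sub>1 c\<^sub>2 c\<^sub>3 rest where c_split: "c = c\<^sub>1 # c\<^sub>2 # c\<^sub>3 # rest"
    using tournament_cycle_length_ge_3[OF T c] by (auto simp: numeral_3_eq_3 Suc_le_length_iff)
  define c' where "c' = c\<^sub>1 # e # d # c\<^sub>3 # rest"
  from c c_split ed have "successively A c'"
    unfolding is_cycle_def c'_def by simp
  moreover have "distinct c'" "set c' \<subseteq> V" "A (last c') (hd c')"
    using c ed c_split tournamentD(2,3)[OF T] tournamentD(4)[OF T, of e]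
    unfolding is_cycle_def c'_def by auto
  ultimately have "is_cycle V A c'" unfolding is_cycle_def c'_def by simp
  with c_split show ?thesis unfolding c'_def by auto
qed

lemma strong_tournament_hamiltonian_cycle:
  assumes T: "tournament V A" and S: "strongly_connected V A"
    and "a \<in> V" "b \<in> V" "a \<noteq> b"
  shows "\<exists>h. is_cycle V A h \<and> set h = V"
proof -
  obtain x y where xy: "A x y"
    using tournamentD(5)[OF T] assms(3-5) by blast
  with T have "x \<noteq> y" "x \<in> V" "y \<in> V" using tournamentD(2-4) by metis+
  with S have "A\<^sup>*\<^sup>* y x" unfolding strongly_connected_def by blast
  then obtain p where p: "p \<noteq> []" "distinct p" "successively A p" "hd p = y" "last p = x"
    "set p \<subseteq> insert y {w. \<exists>s. A s w}" using rtranclp_imp_distinct_path by metis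
  with \<open>x \<noteq> y\<close> have "2 \<le> length p"
    by (cases p rule: remdups_adj.cases) auto
  moreover from p \<open>y \<in> V\<close> have "set p \<subseteq> V" using tournamentD(3)[OF T] by blast
  ultimately have "is_cycle V A p" using p xy unfolding is_cycle_def by simp
  then show ?thesis
  proof (induction "card V - length p" arbitrary: p rule: less_induct)
    case less
    show ?case
    proof (cases "set p = V")
      case False
      then obtain p' where p': "is_cycle V A p'" "length p < length p'"
        using strong_tournament_cycle_extend[OF T S less.prems] by blast
      have "length p' = card (set p')" using p' unfolding is_cycle_def by (simp add: distinct_card)
      also have "\<dots> \<le> card V"
        using p' tournamentD(1)[OF T] unfolding is_cycle_def by (simp add: card_mono)
      finally have "card V - length p' < card V - length p" using p'(2) by linarith
      with less.hyps p'(1) show ?thesis by blast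
    qed (use less.prems in blast)
  qed
qed

lemma hamiltonian_cycle_weak_container:
  assumes h: "is_cycle V A h" "set h = V" and uv: "u \<in> V" "v \<in> V" "u \<noteq> v"
  shows "\<exists>Ps. weak_container V A 2 u v Ps"
proof -
  obtain xs ys where "h = xs @ u # ys" using h(2) uv(1) by (metis split_list)
  with h have "is_cycle V A (u # ys @ xs)" "set (u # ys @ xs) = V"
    using is_cycle_append_swap[of V A xs "u # ys"] by auto
  moreover from this uv obtain p q where "ys @ xs = p @ v # q" by (metis split_list set_ConsD)
  ultimately have c: "is_cycle V A (u # p @ v # q)" and c_set: "set (u # p @ v # q) = V"
    by simp_all
  define P\<^sub>1 where "P\<^sub>1 = u # p @ [v]"
  define P\<^sub>2 where "P\<^sub>2 = v # q @ [u]"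
  have distinct: "distinct (u # p @ v # q)"
    and "successively A (u # p @ v # q)" "A (last (v # q)) u"
    using c unfolding is_cycle_def by auto
  then have "successively A P\<^sub>1" "successively A P\<^sub>2"
    unfolding P\<^sub>1_def P\<^sub>2_def
    using successively_append_iff[of A "u # p @ [v]" q] successively_append_iff[of A "u # p" "v # q"]
      successively_append_iff[of A "v # q" "[u]"] by auto
  with distinct c_set have paths: "is_uv_path V A u v P\<^sub>1" "is_uv_path V A v u P\<^sub>2"
    unfolding is_uv_path_def is_path_iff_successively P\<^sub>1_def P\<^sub>2_def by auto
  have interiors: "interior P\<^sub>1 = set p" "interior P\<^sub>2 = set q"
    unfolding interior_def P\<^sub>1_def P\<^sub>2_def by (simp_all add: butlast_append)
  have "weak_container V A 2 u v [P\<^sub>1, P\<^sub>2]"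
    unfolding weak_container_def
  proof (intro conjI)
    show "distinct [P\<^sub>1, P\<^sub>2]" using uv(3) unfolding P\<^sub>1_def P\<^sub>2_def by simp
    show "\<forall>P\<in>set [P\<^sub>1, P\<^sub>2]. is_uv_path V A u v P \<or> is_uv_path V A v u P"
      using paths by simp
    show "\<forall>i<2. \<forall>j<2. i \<noteq> j \<longrightarrow> interior ([P\<^sub>1, P\<^sub>2] ! i) \<inter> interior ([P\<^sub>1, P\<^sub>2] ! j) = {}"
      using interiors distinct by (auto simp: less_2_cases_iff)
    show "(\<Union>P\<in>set [P\<^sub>1, P\<^sub>2]. set P) = V" using c_set unfolding P\<^sub>1_def P\<^sub>2_def by auto
  qed simp
  then show ?thesis by blast
qed

theorem proposition2p6:
  fixes V :: "'a set" and A :: "'a \<Rightarrow> 'a \<Rightarrow> bool"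
  assumes "tournament V A" and "strongly_connected V A"
  shows "k_star_weakly_connected V A 2"
  unfolding k_star_weakly_connected_def
proof (intro ballI impI)
  fix u v assume uv: "u \<in> V" "v \<in> V" "u \<noteq> v"
  obtain h where "is_cycle V A h" "set h = V"
    using strong_tournament_hamiltonian_cycle[OF assms uv] by blast
  from this uv show "\<exists>Ps. weak_container V A 2 u v Ps"
    by (rule hamiltonian_cycle_weak_container)
qed

end
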